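(* Let $D_G$ be a weighted oriented graph on vertex set $\{x_1,\ldots,x_n\}$ and $I=I(D_G)$. Construct the simple graph $G^D$ with vertex set $\{x_{1,1},\ldots,x_{n,1}\}\cup\{x_{k,2},\ldots,x_{k,w(k)} : x_k \text{ is not a sink and } w(k)\ne 1\}$ and edge set $E(G^D)=\bigcup_{(x_i,x_j)\in E(D_G)}\{\{x_{i,1},x_{j,1}\},\{x_{i,2},x_{j,1}\},\ldots,\{x_{i,w(i)},x_{j,1}\}\}$. Then $(I^{\vee}(\mathrm{pol}))^{\vee}=I(G^D)$.
   Context: A weighted oriented graph $D_G$ with underlying simple graph $G$ is an orientation of the edges with weights $w(k)=w(x_k)\in\mathbb{Z}_{>0}$; $(x_i,x_j)$ denotes an edge oriented from $x_i$ to $x_j$; a sink is a vertex all of whose edges point towards it; sources have weight $1$ by convention. $I(D_G)=\langle x_ix_j^{w(j)}:(x_i,x_j)\in E(D_G)\rangle\subseteq A=K[x_1,\ldots,x_n]$; for a simple graph $G'$, $I(G')$ is the usual squarefree edge ideal. Alexander dual (Miller): for $\mathbf b\in\mathbb N^n$ let $\mathbf m^{\mathbf b}=\langle x_i^{b_i}: b_i\ge1\rangle$; every monomial ideal $I$ is an irredundant intersection of such irreducible ideals, forming the set $\mathrm{Irr}(I)$. Let $\mathbf a_I$ be the exponent vector of the lcm of the minimal generators of $I$. For $\mathbf 0\preceq\mathbf b\preceq\mathbf a$, $\mathbf b^{\mathbf a}$ has $i$-th coordinate $a_i+1-b_i$ if $b_i\ge1$ and $0$ otherwise. Then $I^{\vee}=\langle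 \mathbf x^{\mathbf b^{\mathbf a_I}} : \mathbf m^{\mathbf b}\in\mathrm{Irr}(I)\rangle$; for squarefree ideals this is the usual Alexander dual. Polarization: $x_i^{a}(\mathrm{pol})=\prod_{j=1}^{a}x_{i,j}$, $\mathbf x^{\mathbf a}(\mathrm{pol})=\prod_i x_i^{a_i}(\mathrm{pol})$, and for a monomial ideal $I$ with minimal generators $\mathbf x^{\mathbf a_1},\ldots,\mathbf x^{\mathbf a_m}$, $I(\mathrm{pol})=\langle\mathbf x^{\mathbf a_1}(\mathrm{pol}),\ldots,\mathbf x^{\mathbf a_m}(\mathrm{pol})\rangle$ in $K[x_{i,j}:1\le i\le n,1\le j\le r_i]$, $r_i$ the exponent of $x_i$ in the lcm of the generators. *)

theory Defs
  imports Main
begin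

text \<open>Monomials in variables of type 'v are exponent vectors with finite support.
A monomial ideal is represented by the set of monomials it contains.\<close>

definition monoms :: "('v \<Rightarrow> nat) set" where
  "monoms = {m. finite {v. m v \<noteq> 0}}"

definition mdvd :: "('v \<Rightarrow> nat) \<Rightarrow> ('v \<Rightarrow> nat) \<Rightarrow> bool" where
  "mdvd g m \<longleftrightarrow> (\<forall>v. g v \<le> m v)"

definition mono_ideal :: "('v \<Rightarrow> nat) set \<Rightarrow> ('v \<Rightarrow> nat) set" where
  "mono_ideal G = {m \<in> monoms. \<exists>g\<in>G. mdvd g m}"

definition mingens :: "('v \<Rightarrow> nat) set \<Rightarrow> ('v \<Rightarrow> nat) set" where
  "mingens I = {g \<in> I. \<forall>h\<in>I. mdvd h g \<longrightarrow> h = g}"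

definition lcm_exp :: "('v \<Rightarrow> nat) set \<Rightarrow> ('v \<Rightarrow> nat)" where
  "lcm_exp I = (\<lambda>v. Max (insert 0 ((\<lambda>g. g v) ` mingens I)))"

text \<open>Irreducible ideal m^b = < x_i^(b_i) : b_i >= 1 >.\<close>
definition irr_ideal :: "('v \<Rightarrow> nat) \<Rightarrow> ('v \<Rightarrow> nat) set" where
  "irr_ideal b = {m \<in> monoms. \<exists>v. 1 \<le> b v \<and> b v \<le> m v}"

definition irr_decomp :: "('v \<Rightarrow> nat) set \<Rightarrow> ('v \<Rightarrow> nat) set \<Rightarrow> bool" where
  "irr_decomp I S \<longleftrightarrow> finite S \<and> S \<subseteq> monoms \<and>
     I = monoms \<inter> (\<Inter>b\<in>S. irr_ideal b) \<and>
     (\<forall>b\<in>S. I \<noteq> monoms \<inter> (\<Inter>c\<in>S - {b}. irr_ideal c))"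

definition Irr_set :: "('v \<Rightarrow> nat) set \<Rightarrow> ('v \<Rightarrow> nat) set" where
  "Irr_set I = (THE S. irr_decomp I S)"

definition dual_exp :: "('v \<Rightarrow> nat) \<Rightarrow> ('v \<Rightarrow> nat) \<Rightarrow> ('v \<Rightarrow> nat)" where
  "dual_exp a b = (\<lambda>v. if 1 \<le> b v then a v + 1 - b v else 0)"

definition alex_dual :: "('v \<Rightarrow> nat) set \<Rightarrow> ('v \<Rightarrow> nat) set" where
  "alex_dual I = mono_ideal (dual_exp (lcm_exp I) ` Irr_set I)"

text \<open>Polarization: x_i^a(pol) = x_{i,1} ... x_{i,a}.\<close>
definition pol_mono :: "('v \<Rightarrow> nat) \<Rightarrow> ('v \<times> nat \<Rightarrow> nat)" where
  "pol_mono m = (\<lambda>(i, j). if 1 \<le> j \<and> j \<le> m i then 1 else 0)"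

definition pol :: "('v \<Rightarrow> nat) set \<Rightarrow> ('v \<times> nat \<Rightarrow> nat) set" where
  "pol I = mono_ideal (pol_mono ` mingens I)"

definition sqf :: "'v set \<Rightarrow> ('v \<Rightarrow> nat)" where
  "sqf A = (\<lambda>v. if v \<in> A then 1 else 0)"

definition edge_ideal :: "'v set set \<Rightarrow> ('v \<Rightarrow> nat) set" where
  "edge_ideal E = mono_ideal (sqf ` E)"

definition source :: "(nat \<times> nat) set \<Rightarrow> nat \<Rightarrow> bool" where
  "source E k \<longleftrightarrow> (\<forall>i. (i, k) \<notin> E)"

definition sink :: "(nat \<times> nat) set \<Rightarrow> nat \<Rightarrow> bool" where
  "sink E k \<longleftrightarrow> (\<forall>j. (k, j) \<notin> E)"

definition weighted_oriented_graph :: "nat \<Rightarrow> (nat \<times> nat) set \<Rightarrow> (nat \<Rightarrow> nat) \<Rightarrow> bool" where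
  "weighted_oriented_graph n E w \<longleftrightarrow>
     E \<subseteq> {1..n} \<times> {1..n} \<and>
     (\<forall>i j. (i, j) \<in> E \<longrightarrow> i \<noteq> j \<and> (j, i) \<notin> E) \<and>
     (\<forall>k\<in>{1..n}. 0 < w k) \<and>
     (\<forall>k\<in>{1..n}. source E k \<longrightarrow> w k = 1)"

definition edge_mono :: "(nat \<Rightarrow> nat) \<Rightarrow> nat \<Rightarrow> nat \<Rightarrow> (nat \<Rightarrow> nat)" where
  "edge_mono w i j = (\<lambda>v. (if v = i then 1 else 0) + (if v = j then w j else 0))"

definition wog_ideal :: "(nat \<times> nat) set \<Rightarrow> (nat \<Rightarrow> nat) \<Rightarrow> (nat \<Rightarrow> nat) set" where
  "wog_ideal E w = mono_ideal {edge_mono w i j | i j. (i, j) \<in> E}"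

text \<open>Vertex set and edge set of G^D (vertex x_{k,l} is the pair (k,l)).\<close>
definition GD_vertices :: "nat \<Rightarrow> (nat \<times> nat) set \<Rightarrow> (nat \<Rightarrow> nat) \<Rightarrow> (nat \<times> nat) set" where
  "GD_vertices n E w = {(k, 1) | k. k \<in> {1..n}} \<union>
     {(k, l) | k l. k \<in> {1..n} \<and> \<not> sink E k \<and> w k \<noteq> 1 \<and> 2 \<le> l \<and> l \<le> w k}"

definition GD_edges :: "(nat \<times> nat) set \<Rightarrow> (nat \<Rightarrow> nat) \<Rightarrow> (nat \<times> nat) set set" where
  "GD_edges E w = (\<Union>(i, j)\<in>E. {{(i, l), (j, 1)} | l. 1 \<le> l \<and> l \<le> w i})"

end

theory Submission
  imports Defs
begin

(* For a monomial m in the polarized variables x_(v,l) let y = dual_depol a m, where a is the lcm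
   exponent of I: y_v is a_v + 1 minus the least l such that x_(v,l) divides m. The minimal
   generators of the dual are the x^(b^a) for b in Irr(I); their polarizations are squarefree, and
   the Alexander dual of a squarefree ideal consists of the monomials whose support meets every
   generator. Now m meets the support of x^(b^a)(pol) iff b_v <= y_v for some v with b_v >= 1, so
   m lies in the double dual iff y lies in the intersection of the m^b, which is I.
   For I = I(D_G) the lcm exponent is the weight on every vertex of an edge (sources have weight 1),
   and y lies in I(D_G) iff some edge (x_i, x_j) has y_i >= 1 and y_j >= w(j), i.e. iff m is
   divisible by x_(i,l) x_(j,1) for some l <= w(i), a generator of I(G^D). *)

subsection \<open>Divisibility, least common multiples and minimal generators\<close>

lemma mdvd_refl [simp]: "mdvd m m"
  by (simp add: mdvd_def)

lemma mdvd_trans: "mdvd a b \<Longrightarrow> mdvd b c \<Longrightarrow> mdvd a c"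
  unfolding mdvd_def by (auto intro: le_trans)

lemma mdvd_antisym: "mdvd a b \<Longrightarrow> mdvd b a \<Longrightarrow> a = b"
  unfolding mdvd_def by (rule ext) (meson antisym)

lemma mdvd_monoms:
  assumes "mdvd g m" "m \<in> monoms"
  shows "g \<in> monoms"
proof -
  have "{v. g v \<noteq> 0} \<subseteq> {v. m v \<noteq> 0}"
    using assms(1) unfolding mdvd_def by (metis (mono_tags) Collect_mono le_zero_eq)
  with assms(2) show ?thesis
    unfolding monoms_def mem_Collect_eq by (rule finite_subset[rotated])
qed

lemma mono_ideal_subset_monoms: "mono_ideal G \<subseteq> monoms"
  by (auto simp: mono_ideal_def)

lemma generator_in_mono_ideal: "G \<subseteq> monoms \<Longrightarrow> g \<in> G \<Longrightarrow> g \<in> mono_ideal G"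
  unfolding mono_ideal_def by (blast intro: mdvd_refl)

lemma finite_divisors:
  assumes "a \<in> monoms"
  shows "finite {b. mdvd b a}"
proof -
  let ?A = "{v. a v \<noteq> 0}"
  let ?B = "\<Union>v\<in>?A. {0..a v}"
  have fin: "finite ?A" "finite ?B"
    using assms by (simp_all add: monoms_def)
  have "{b. mdvd b a} \<subseteq> {f. \<forall>x. (x \<in> ?A \<longrightarrow> f x \<in> ?B) \<and> (x \<notin> ?A \<longrightarrow> f x = 0)}"
  proof
    fix b assume "b \<in> {b. mdvd b a}"
    then have le: "b x \<le> a x" for x
      by (simp add: mdvd_def)
    have "b x \<in> ?B" if "x \<in> ?A" for x
      using le[of x] that by auto
    moreover have "b x = 0" if "x \<notin> ?A" for x
      using le[of x] that by simp
    ultimately show "b \<in> {f. \<forall>x. (x \<in> ?A \<longrightarrow> f x \<in> ?B) \<and> (x \<notin> ?A \<longrightarrow> f x = 0)}"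
      by blast
  qed
  then show ?thesis
    using finite_set_of_finite_funs[OF fin] by (rule finite_subset)
qed

definition mlcm :: "('v \<Rightarrow> nat) set \<Rightarrow> ('v \<Rightarrow> nat)" where
  "mlcm G = (\<lambda>v. Max (insert 0 ((\<lambda>g. g v) ` G)))"

lemma lcm_exp_eq_mlcm: "lcm_exp I = mlcm (mingens I)"
  by (simp add: lcm_exp_def mlcm_def)

lemma mdvd_mlcm: "finite G \<Longrightarrow> g \<in> G \<Longrightarrow> mdvd g (mlcm G)"
  unfolding mdvd_def mlcm_def by (auto intro: Max_ge)

lemma mlcm_attained:
  assumes "finite G" "mlcm G v \<noteq> 0"
  obtains g where "g \<in> G" "mlcm G v = g v"
proof -
  have "mlcm G v \<in> insert 0 ((\<lambda>g. g v) ` G)"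
    unfolding mlcm_def using assms(1) by (intro Max_in) auto
  with assms(2) that show ?thesis by auto
qed

lemma mlcm_monoms:
  assumes "finite G" "G \<subseteq> monoms"
  shows "mlcm G \<in> monoms"
proof -
  have "{v. mlcm G v \<noteq> 0} \<subseteq> (\<Union>g\<in>G. {v. g v \<noteq> 0})"
  proof
    fix v assume "v \<in> {v. mlcm G v \<noteq> 0}"
    then obtain g where "g \<in> G" "mlcm G v = g v" "mlcm G v \<noteq> 0"
      using mlcm_attained[OF assms(1)] by blast
    then show "v \<in> (\<Union>g\<in>G. {v. g v \<noteq> 0})" by auto
  qed
  moreover have "finite (\<Union>g\<in>G. {v. g v \<noteq> 0})"
    using assms by (auto simp: monoms_def)
  ultimately show ?thesis
    unfolding monoms_def mem_Collect_eq by (rule finite_subset)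
qed

lemma mlcm_eqI:
  assumes "finite G" "\<And>g. g \<in> G \<Longrightarrow> g v \<le> c" "g \<in> G" "g v = c"
  shows "mlcm G v = c"
  unfolding mlcm_def using assms by (intro Max_eqI) auto

lemma ex_mingens_mdvd:
  assumes "I \<subseteq> monoms" "m \<in> I"
  obtains g where "g \<in> mingens I" "mdvd g m"
proof -
  define deg where "deg h = (\<Sum>v\<in>{v. m v \<noteq> 0}. h v)" for h :: "'a \<Rightarrow> nat"
  have fin: "finite {v. m v \<noteq> 0}"
    using assms monoms_def by auto
  obtain h where h: "h \<in> I" "mdvd h m"
    and h_least: "\<And>h'. h' \<in> I \<Longrightarrow> mdvd h' m \<Longrightarrow> deg h \<le> deg h'"
    using ex_has_least_nat[of "\<lambda>h. h \<in> I \<and> mdvd h m" m deg] assms(2) by auto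
  have "h' = h" if h': "h' \<in> I" "mdvd h' h" for h'
  proof (rule ccontr)
    assume "h' \<noteq> h"
    then obtain v where v: "h' v < h v"
      using h'(2) mdvd_antisym[of h' h] by (auto simp: mdvd_def not_le) (metis le_neq_implies_less)
    then have "m v \<noteq> 0"
      using h(2) v unfolding mdvd_def by (metis le_zero_eq not_less_zero)
    then have "deg h' < deg h"
      unfolding deg_def using sum_strict_mono_ex1[OF fin, of h' h] h'(2) v by (auto simp: mdvd_def)
    moreover have "deg h \<le> deg h'"
      using h_least h' mdvd_trans h(2) by blast
    ultimately show False by simp
  qed
  then have "h \<in> mingens I"
    using h(1) by (auto simp: mingens_def)
  with h(2) that show ?thesis by blast
qed

lemma mingens_mono_ideal_subset:
  assumes "G \<subseteq> monoms"
  shows "mingens (mono_ideal G) \<subseteq> G"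
proof
  fix g assume g: "g \<in> mingens (mono_ideal G)"
  then obtain h where h: "h \<in> G" "mdvd h g"
    by (auto simp: mingens_def mono_ideal_def)
  then have "h = g"
    using g generator_in_mono_ideal[OF assms] by (auto simp: mingens_def)
  with h show "g \<in> G" by simp
qed

lemma mingens_mono_ideal_antichain:
  assumes "G \<subseteq> monoms" and antichain: "\<And>g h. g \<in> G \<Longrightarrow> h \<in> G \<Longrightarrow> mdvd h g \<Longrightarrow> h = g"
  shows "mingens (mono_ideal G) = G"
proof
  show "G \<subseteq> mingens (mono_ideal G)"
  proof
    fix g assume g: "g \<in> G"
    have "h = g" if h: "h \<in> mono_ideal G" "mdvd h g" for h
    proof -
      obtain g' where "g' \<in> G" "mdvd g' h"
        using h(1) by (auto simp: mono_ideal_def)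
      with antichain[OF g] h(2) show "h = g"
        by (metis mdvd_antisym mdvd_trans)
    qed
    with g show "g \<in> mingens (mono_ideal G)"
      by (auto simp: mingens_def generator_in_mono_ideal[OF assms(1)])
  qed
qed (rule mingens_mono_ideal_subset[OF assms(1)])

lemma ball_mingens_mono_ideal_iff:
  assumes "G \<subseteq> monoms" and upward: "\<And>e e'. mdvd e e' \<Longrightarrow> P e \<Longrightarrow> P e'"
  shows "(\<forall>e\<in>mingens (mono_ideal G). P e) \<longleftrightarrow> (\<forall>e\<in>G. P e)"
proof
  assume P: "\<forall>e\<in>mingens (mono_ideal G). P e"
  show "\<forall>e\<in>G. P e"
  proof
    fix e assume "e \<in> G"
    then obtain g where "g \<in> mingens (mono_ideal G)" "mdvd g e"
      using ex_mingens_mdvd[OF mono_ideal_subset_monoms] generator_in_mono_ideal[OF assms(1)] by metis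
    with P upward show "P e" by blast
  qed
qed (use mingens_mono_ideal_subset[OF assms(1)] in blast)

subsection \<open>Irreducible decompositions\<close>

definition irr_inter :: "('v \<Rightarrow> nat) set \<Rightarrow> ('v \<Rightarrow> nat) set" where
  "irr_inter S = monoms \<inter> (\<Inter>b\<in>S. irr_ideal b)"

lemma irr_decomp_iff:
  "irr_decomp I S \<longleftrightarrow> finite S \<and> S \<subseteq> monoms \<and> I = irr_inter S \<and> (\<forall>b\<in>S. I \<noteq> irr_inter (S - {b}))"
  by (simp add: irr_decomp_def irr_inter_def)

lemma irr_ideal_mdvd_closed: "x \<in> irr_ideal b \<Longrightarrow> mdvd x y \<Longrightarrow> y \<in> monoms \<Longrightarrow> y \<in> irr_ideal b"
  unfolding irr_ideal_def mdvd_def by (auto intro: le_trans)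

(* Irreducibility of m^b: pick f c in m^c but not in m^b for every c; their lcm lies in every m^c,
   and since each of its exponents is attained by some f c, it is not in m^b. *)
lemma irr_inter_subset_irr_idealD:
  assumes "finite T" "irr_inter T \<subseteq> irr_ideal b"
  shows "\<exists>c\<in>T. irr_ideal c \<subseteq> irr_ideal b"
proof (rule ccontr)
  assume "\<not> ?thesis"
  then have "\<forall>c\<in>T. \<exists>x. x \<in> irr_ideal c - irr_ideal b"
    by blast
  then obtain f where f: "\<And>c. c \<in> T \<Longrightarrow> f c \<in> irr_ideal c - irr_ideal b"
    by metis
  define m where "m = mlcm (f ` T)"
  have "f ` T \<subseteq> monoms"
    using f by (auto simp: irr_ideal_def)
  then have m: "m \<in> monoms"
    unfolding m_def using assms(1) by (intro mlcm_monoms) auto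
  have "m \<in> irr_ideal c" if "c \<in> T" for c
    using f[OF that] mdvd_mlcm[of "f ` T" "f c"] assms(1) that m
    by (auto simp: m_def intro: irr_ideal_mdvd_closed)
  with m assms(2) have "m \<in> irr_ideal b"
    by (auto simp: irr_inter_def)
  then obtain v where v: "1 \<le> b v" "b v \<le> m v"
    by (auto simp: irr_ideal_def)
  then obtain c where "c \<in> T" "m v = f c v"
    using mlcm_attained[of "f ` T" v] assms(1) by (auto simp: m_def)
  with v f show False
    by (auto simp: irr_ideal_def)
qed

lemma irr_ideal_subset_le:
  assumes "irr_ideal c \<subseteq> irr_ideal b" "1 \<le> c v"
  shows "1 \<le> b v \<and> b v \<le> c v"
proof -
  define p where "p = (\<lambda>u. if u = v then c v else 0)"
  have "{u. p u \<noteq> 0} \<subseteq> {v}"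
    by (auto simp: p_def)
  then have "p \<in> monoms"
    unfolding monoms_def mem_Collect_eq by (rule finite_subset) simp
  then have "p \<in> irr_ideal c"
    using assms(2) by (auto simp: irr_ideal_def p_def)
  with assms(1) obtain u where "1 \<le> b u" "b u \<le> p u"
    by (auto simp: irr_ideal_def)
  then show ?thesis
    by (auto simp: p_def split: if_splits)
qed

lemma irr_ideal_inj:
  assumes "irr_ideal b = irr_ideal c"
  shows "b = c"
proof
  fix v
  have "1 \<le> b v \<longleftrightarrow> 1 \<le> c v"
    using irr_ideal_subset_le[of b c v] irr_ideal_subset_le[of c b v] assms by auto
  moreover have "b v = c v" if "1 \<le> b v" "1 \<le> c v"
    using that irr_ideal_subset_le[of b c v] irr_ideal_subset_le[of c b v] assms by auto
  ultimately show "b v = c v"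
    by (metis One_nat_def less_one not_less)
qed

lemma irr_decomp_subset:
  assumes S: "irr_decomp I S" and T: "irr_decomp I T"
  shows "S \<subseteq> T"
proof
  fix b assume b: "b \<in> S"
  have IS: "I = irr_inter S" and IT: "I = irr_inter T" and "finite S" "finite T"
    using S T by (auto simp: irr_decomp_iff)
  then obtain c where c: "c \<in> T" "irr_ideal c \<subseteq> irr_ideal b"
    using b irr_inter_subset_irr_idealD[of T b] by (auto simp: irr_inter_def)
  have "irr_inter S \<subseteq> irr_ideal c"
    using IS IT c(1) by (auto simp: irr_inter_def)
  then obtain b' where b': "b' \<in> S" "irr_ideal b' \<subseteq> irr_ideal c"
    using irr_inter_subset_irr_idealD[OF \<open>finite S\<close>] by blast
  have "b' = b"
  proof (rule ccontr)
    assume "b' \<noteq> b"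
    with b' c have "irr_inter (S - {b}) \<subseteq> irr_ideal b"
      by (auto simp: irr_inter_def)
    then have "I = irr_inter (S - {b})"
      using IS b by (auto simp: irr_inter_def)
    with S b show False
      by (auto simp: irr_decomp_iff)
  qed
  with b' c have "b = c"
    by (intro irr_ideal_inj) auto
  with c show "b \<in> T" by simp
qed

lemma Irr_set_eqI: "irr_decomp I S \<Longrightarrow> Irr_set I = S"
  unfolding Irr_set_def by (rule the_equality) (simp_all add: irr_decomp_subset subset_antisym)

lemma irredundant_subfamily:
  assumes "finite S0"
  obtains S where "S \<subseteq> S0" "irr_inter S = irr_inter S0" "\<forall>b\<in>S. irr_inter S0 \<noteq> irr_inter (S - {b})"
proof -
  obtain S where S: "S \<subseteq> S0 \<and> irr_inter S = irr_inter S0"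
    and S_least: "\<forall>S'. S' \<subseteq> S0 \<and> irr_inter S' = irr_inter S0 \<longrightarrow> card S \<le> card S'"
    using ex_has_least_nat[of "\<lambda>S. S \<subseteq> S0 \<and> irr_inter S = irr_inter S0" S0 card] by blast
  have "finite S"
    using S assms finite_subset by blast
  have "irr_inter S0 \<noteq> irr_inter (S - {b})" if b: "b \<in> S" for b
  proof
    assume "irr_inter S0 = irr_inter (S - {b})"
    moreover have "S - {b} \<subseteq> S0"
      using S by blast
    ultimately have "card S \<le> card (S - {b})"
      using S_least by metis
    moreover have "card (S - {b}) < card S"
      using card_Diff1_less[OF \<open>finite S\<close> b] .
    ultimately show False by simp
  qed
  with S that show ?thesis by blast
qed

(* If m is not in the ideal, every generator exceeds m at some v with m v < a v; the irreducible
   ideal with exponents m v + 1 at those v then contains the ideal but not m. *)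
lemma mono_ideal_eq_irr_inter_divisors:
  assumes "G \<subseteq> monoms" "\<forall>g\<in>G. mdvd g a"
  shows "mono_ideal G = irr_inter {b. mdvd b a \<and> mono_ideal G \<subseteq> irr_ideal b}"
proof
  show "mono_ideal G \<subseteq> irr_inter {b. mdvd b a \<and> mono_ideal G \<subseteq> irr_ideal b}"
    unfolding irr_inter_def using mono_ideal_subset_monoms by blast
  show "irr_inter {b. mdvd b a \<and> mono_ideal G \<subseteq> irr_ideal b} \<subseteq> mono_ideal G"
  proof
    fix m assume m: "m \<in> irr_inter {b. mdvd b a \<and> mono_ideal G \<subseteq> irr_ideal b}"
    show "m \<in> mono_ideal G"
    proof (rule ccontr)
      assume m_notin: "m \<notin> mono_ideal G"
      define b where "b v = (if m v < a v then m v + 1 else 0)" for v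
      have "mono_ideal G \<subseteq> irr_ideal b"
      proof
        fix x assume "x \<in> mono_ideal G"
        then obtain g where g: "g \<in> G" "mdvd g x" and x: "x \<in> monoms"
          by (auto simp: mono_ideal_def)
        have "\<not> mdvd g m"
          using g(1) m m_notin by (auto simp: mono_ideal_def irr_inter_def)
        then obtain v where v: "m v < g v"
          by (auto simp: mdvd_def not_le)
        moreover have "g v \<le> a v" "g v \<le> x v"
          using g assms(2) by (auto simp: mdvd_def)
        ultimately have "1 \<le> b v \<and> b v \<le> x v"
          by (simp add: b_def)
        with x show "x \<in> irr_ideal b"
          by (auto simp: irr_ideal_def)
      qed
      moreover have "mdvd b a"
        by (simp add: b_def mdvd_def)
      ultimately have "m \<in> irr_ideal b"
        using m by (auto simp: irr_inter_def)
      then show False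
        by (auto simp: irr_ideal_def b_def split: if_splits)
    qed
  qed
qed

lemma ex_irr_decomp:
  assumes "finite G" "G \<subseteq> monoms"
  obtains S where "irr_decomp (mono_ideal G) S"
proof -
  define S0 where "S0 = {b. mdvd b (mlcm G) \<and> mono_ideal G \<subseteq> irr_ideal b}"
  have lcm: "mlcm G \<in> monoms" "\<forall>g\<in>G. mdvd g (mlcm G)"
    using assms by (auto intro: mlcm_monoms mdvd_mlcm)
  have "S0 \<subseteq> {b. mdvd b (mlcm G)}"
    by (auto simp: S0_def)
  then have S0_fin: "finite S0"
    using finite_divisors[OF lcm(1)] by (rule finite_subset)
  have S0_monoms: "S0 \<subseteq> monoms"
    using lcm(1) mdvd_monoms by (auto simp: S0_def)
  have I: "mono_ideal G = irr_inter S0"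
    unfolding S0_def using assms(2) lcm(2) by (rule mono_ideal_eq_irr_inter_divisors)
  obtain S where S: "S \<subseteq> S0" "irr_inter S = irr_inter S0" "\<forall>b\<in>S. irr_inter S0 \<noteq> irr_inter (S - {b})"
    using irredundant_subfamily[OF S0_fin] by blast
  have "finite S"
    using S(1) S0_fin by (rule finite_subset)
  with S S0_monoms I have "irr_decomp (mono_ideal G) S"
    by (auto simp: irr_decomp_iff)
  with that show ?thesis .
qed

lemma irr_decomp_Irr_set:
  assumes "finite G" "G \<subseteq> monoms"
  shows "irr_decomp (mono_ideal G) (Irr_set (mono_ideal G))"
  using ex_irr_decomp[OF assms] Irr_set_eqI by metis

subsection \<open>Squarefree monomial ideals and minimal transversals\<close>

definition supp :: "('v \<Rightarrow> nat) \<Rightarrow> 'v set" where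
  "supp m = {v. m v \<noteq> 0}"

definition transversal :: "'v set set \<Rightarrow> 'v set \<Rightarrow> bool" where
  "transversal F A \<longleftrightarrow> (\<forall>B\<in>F. A \<inter> B \<noteq> {})"

definition min_transversals :: "'v set set \<Rightarrow> 'v set set" where
  "min_transversals F = {A. transversal F A \<and> (\<forall>A'\<subseteq>A. transversal F A' \<longrightarrow> A' = A)}"

lemma sqf_mdvd_iff: "mdvd (sqf B) m \<longleftrightarrow> B \<subseteq> supp m"
  unfolding mdvd_def sqf_def supp_def by (auto simp: Suc_le_eq)

lemma supp_sqf [simp]: "supp (sqf B) = B"
  by (auto simp: supp_def sqf_def)

lemma sqf_monoms: "finite B \<Longrightarrow> sqf B \<in> monoms"
  by (simp add: monoms_def sqf_def)

lemma mem_irr_ideal_sqf: "m \<in> irr_ideal (sqf A) \<longleftrightarrow> m \<in> monoms \<and> A \<inter> supp m \<noteq> {}"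
  by (auto simp: irr_ideal_def sqf_def supp_def Suc_le_eq split: if_splits)

lemma mem_mono_ideal_sqf: "m \<in> mono_ideal (sqf ` F) \<longleftrightarrow> m \<in> monoms \<and> (\<exists>B\<in>F. B \<subseteq> supp m)"
  by (auto simp: mono_ideal_def sqf_mdvd_iff)

lemma min_transversal_transversal: "A \<in> min_transversals F \<Longrightarrow> transversal F A"
  by (simp add: min_transversals_def)

lemma min_transversal_minimal: "A \<in> min_transversals F \<Longrightarrow> A' \<subseteq> A \<Longrightarrow> transversal F A' \<Longrightarrow> A' = A"
  by (simp add: min_transversals_def)

lemma ex_min_transversal_subset:
  assumes "finite F" "\<forall>B\<in>F. finite B" "transversal F X"
  obtains A where "A \<in> min_transversals F" "A \<subseteq> X"
proof -
  define X' where "X' = X \<inter> \<Union>F"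
  have "finite X'"
    using assms(1,2) by (simp add: X'_def)
  have "transversal F X'"
    using assms(3) by (auto simp: transversal_def X'_def)
  then obtain A where A: "A \<subseteq> X' \<and> transversal F A"
    and A_least: "\<forall>A'. A' \<subseteq> X' \<and> transversal F A' \<longrightarrow> card A \<le> card A'"
    using ex_has_least_nat[of "\<lambda>A. A \<subseteq> X' \<and> transversal F A" X' card] by blast
  have "finite A"
    using A \<open>finite X'\<close> finite_subset by blast
  have "A' = A" if "A' \<subseteq> A" "transversal F A'" for A'
    using A A_least that card_subset_eq[OF \<open>finite A\<close> that(1)] card_mono[OF \<open>finite A\<close> that(1)]
    by (metis dual_order.trans le_antisym)
  with A have "A \<in> min_transversals F"
    by (simp add: min_transversals_def)
  with A that show ?thesis
    by (auto simp: X'_def)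
qed

lemma min_transversal_subset_Union:
  assumes "A \<in> min_transversals F"
  shows "A \<subseteq> \<Union>F"
proof -
  have "A \<inter> \<Union>F \<inter> B \<noteq> {}" if "B \<in> F" for B
    using min_transversal_transversal[OF assms] that unfolding transversal_def by blast
  then have "transversal F (A \<inter> \<Union>F)"
    by (simp add: transversal_def)
  then have "A \<inter> \<Union>F = A"
    using min_transversal_minimal[OF assms] by blast
  then show ?thesis by blast
qed

lemma finite_min_transversals:
  assumes "finite F" "\<forall>B\<in>F. finite B"
  shows "finite (min_transversals F)"
proof -
  have "min_transversals F \<subseteq> Pow (\<Union>F)"
    using min_transversal_subset_Union by blast
  moreover have "finite (Pow (\<Union>F))"
    using assms by simp
  ultimately show ?thesis
    by (rule finite_subset)
qed

lemma min_transversal_private_member: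
  assumes "A \<in> min_transversals F" "v \<in> A"
  obtains B where "B \<in> F" "B \<inter> A = {v}"
proof -
  have "A - {v} \<noteq> A"
    using assms(2) by blast
  then have "\<not> transversal F (A - {v})"
    using min_transversal_minimal[OF assms(1)] by blast
  then obtain B where B: "B \<in> F" "(A - {v}) \<inter> B = {}"
    by (auto simp: transversal_def)
  moreover have "A \<inter> B \<noteq> {}"
    using min_transversal_transversal[OF assms(1)] B(1) by (simp add: transversal_def)
  ultimately have "B \<inter> A = {v}"
    by blast
  with B that show ?thesis by blast
qed

lemma mono_ideal_sqf_eq_irr_inter:
  assumes "finite F" "\<forall>B\<in>F. finite B"
  shows "mono_ideal (sqf ` F) = irr_inter (sqf ` min_transversals F)"
proof (rule set_eqI)
  fix m
  have "m \<in> irr_inter (sqf ` min_transversals F) \<longleftrightarrow>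
      m \<in> monoms \<and> (\<forall>A\<in>min_transversals F. A \<inter> supp m \<noteq> {})"
    by (auto simp: irr_inter_def mem_irr_ideal_sqf)
  moreover have "(\<forall>A\<in>min_transversals F. A \<inter> supp m \<noteq> {}) \<longleftrightarrow> (\<exists>B\<in>F. B \<subseteq> supp m)"
  proof
    assume meets: "\<forall>A\<in>min_transversals F. A \<inter> supp m \<noteq> {}"
    show "\<exists>B\<in>F. B \<subseteq> supp m"
    proof (rule ccontr)
      assume "\<not> (\<exists>B\<in>F. B \<subseteq> supp m)"
      then have "transversal F (\<Union>F - supp m)"
        by (auto simp: transversal_def)
      then obtain A where "A \<in> min_transversals F" "A \<subseteq> \<Union>F - supp m"
        using ex_min_transversal_subset[OF assms] by blast
      with meets show False by blast
    qed
  next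
    assume "\<exists>B\<in>F. B \<subseteq> supp m"
    then obtain B where B: "B \<in> F" "B \<subseteq> supp m" by blast
    show "\<forall>A\<in>min_transversals F. A \<inter> supp m \<noteq> {}"
    proof
      fix A assume "A \<in> min_transversals F"
      with B(1) have "A \<inter> B \<noteq> {}"
        using min_transversal_transversal by (auto simp: transversal_def)
      with B(2) show "A \<inter> supp m \<noteq> {}" by blast
    qed
  qed
  ultimately show "m \<in> mono_ideal (sqf ` F) \<longleftrightarrow> m \<in> irr_inter (sqf ` min_transversals F)"
    by (simp add: mem_mono_ideal_sqf)
qed

lemma irr_decomp_sqf:
  assumes "finite F" "\<forall>B\<in>F. finite B"
  shows "irr_decomp (mono_ideal (sqf ` F)) (sqf ` min_transversals F)"
  unfolding irr_decomp_iff
proof (intro conjI ballI)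
  show "finite (sqf ` min_transversals F)"
    using finite_min_transversals[OF assms] by simp
  have fin_Union: "finite (\<Union>F)"
    using assms by simp
  then show "sqf ` min_transversals F \<subseteq> monoms"
    using finite_subset[OF min_transversal_subset_Union] sqf_monoms by blast
  show "mono_ideal (sqf ` F) = irr_inter (sqf ` min_transversals F)"
    using assms by (rule mono_ideal_sqf_eq_irr_inter)
  fix c assume "c \<in> sqf ` min_transversals F"
  then obtain A where A: "A \<in> min_transversals F" "c = sqf A"
    by blast
  define m where "m = sqf (\<Union>F - A)"
  have m: "m \<in> monoms"
    using fin_Union by (simp add: m_def sqf_monoms)
  have "m \<notin> mono_ideal (sqf ` F)"
    using min_transversal_transversal[OF A(1)] by (auto simp: m_def mem_mono_ideal_sqf transversal_def)
  moreover have "m \<in> irr_ideal c'" if c': "c' \<in> sqf ` min_transversals F - {c}" for c'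
  proof -
    obtain A' where A': "A' \<in> min_transversals F" "c' = sqf A'"
      using c' by blast
    with A c' have "\<not> A' \<subseteq> A"
      using min_transversal_minimal[OF A(1) _ min_transversal_transversal[OF A'(1)]] by blast
    with min_transversal_subset_Union[OF A'(1)] have "A' \<inter> supp m \<noteq> {}"
      by (auto simp: m_def)
    with A'(2) m show ?thesis
      by (simp add: mem_irr_ideal_sqf)
  qed
  ultimately show "mono_ideal (sqf ` F) \<noteq> irr_inter (sqf ` min_transversals F - {c})"
    using m by (auto simp: irr_inter_def)
qed

lemma lcm_exp_mono_ideal_sqf:
  assumes "finite F" "\<forall>B\<in>F. finite B" "A \<in> min_transversals F" "v \<in> A"
  shows "lcm_exp (mono_ideal (sqf ` F)) v = 1"
proof -
  let ?J = "mono_ideal (sqf ` F)"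
  have gens: "sqf ` F \<subseteq> monoms"
    using assms(2) sqf_monoms by blast
  have mingens: "mingens ?J \<subseteq> sqf ` F"
    using mingens_mono_ideal_subset[OF gens] .
  obtain B where B: "B \<in> F" "B \<inter> A = {v}"
    using min_transversal_private_member[OF assms(3,4)] .
  obtain g where g: "g \<in> mingens ?J" "mdvd g (sqf B)"
    using ex_mingens_mdvd[OF mono_ideal_subset_monoms generator_in_mono_ideal[OF gens]] B(1) by blast
  then obtain B' where B': "B' \<in> F" "g = sqf B'" "B' \<subseteq> B"
    using mingens by (auto simp: sqf_mdvd_iff)
  have "A \<inter> B' \<noteq> {}"
    using min_transversal_transversal[OF assms(3)] B'(1) by (simp add: transversal_def)
  with B(2) B'(3) have "g v = 1"
    by (auto simp: B'(2) sqf_def)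
  moreover have "finite (mingens ?J)"
    using mingens finite_imageI[OF assms(1)] by (rule finite_subset)
  ultimately show ?thesis
    unfolding lcm_exp_eq_mlcm using mingens g(1)
    by (intro mlcm_eqI[of _ _ _ g]) (auto simp: sqf_def)
qed

lemma alex_dual_mono_ideal_sqf:
  assumes "finite F" "\<forall>B\<in>F. finite B"
  shows "alex_dual (mono_ideal (sqf ` F)) = {m \<in> monoms. transversal F (supp m)}"
proof -
  let ?J = "mono_ideal (sqf ` F)"
  have "dual_exp (lcm_exp ?J) (sqf A) = sqf A" if "A \<in> min_transversals F" for A
    using lcm_exp_mono_ideal_sqf[OF assms that] by (auto simp: dual_exp_def sqf_def)
  then have "dual_exp (lcm_exp ?J) ` Irr_set ?J = sqf ` min_transversals F"
    using Irr_set_eqI[OF irr_decomp_sqf[OF assms]] by (simp add: image_image)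
  then have "alex_dual ?J = mono_ideal (sqf ` min_transversals F)"
    by (simp add: alex_dual_def)
  moreover have "(\<exists>A\<in>min_transversals F. A \<subseteq> supp m) \<longleftrightarrow> transversal F (supp m)" for m
  proof
    assume "\<exists>A\<in>min_transversals F. A \<subseteq> supp m"
    then show "transversal F (supp m)"
      using min_transversal_transversal unfolding transversal_def by blast
  next
    assume "transversal F (supp m)"
    then obtain A where "A \<in> min_transversals F" "A \<subseteq> supp m"
      by (rule ex_min_transversal_subset[OF assms])
    then show "\<exists>A\<in>min_transversals F. A \<subseteq> supp m" by blast
  qed
  ultimately show ?thesis
    by (auto simp: mem_mono_ideal_sqf)
qed

subsection \<open>Polarization of an Alexander dual\<close>

definition pol_vars :: "('v \<Rightarrow> nat) \<Rightarrow> ('v \<times> nat) set" where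
  "pol_vars e = {(v, l). 1 \<le> l \<and> l \<le> e v}"

lemma pol_mono_eq_sqf: "pol_mono e = sqf (pol_vars e)"
  by (auto simp: pol_mono_def sqf_def pol_vars_def fun_eq_iff)

lemma pol_eq_mono_ideal_sqf: "pol I = mono_ideal (sqf ` pol_vars ` mingens I)"
  by (simp add: pol_def pol_mono_eq_sqf image_image)

lemma finite_pol_vars:
  assumes "e \<in> monoms"
  shows "finite (pol_vars e)"
proof -
  have "pol_vars e \<subseteq> Sigma {v. e v \<noteq> 0} (\<lambda>v. {1..e v})"
    by (auto simp: pol_vars_def)
  moreover have "finite (Sigma {v. e v \<noteq> 0} (\<lambda>v. {1..e v}))"
    using assms by (auto simp: monoms_def)
  ultimately show ?thesis
    by (rule finite_subset)
qed

lemma pol_vars_mono: "mdvd e e' \<Longrightarrow> pol_vars e \<subseteq> pol_vars e'"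
  by (auto simp: pol_vars_def mdvd_def intro: le_trans)

lemma dual_exp_monoms:
  assumes "b \<in> monoms"
  shows "dual_exp a b \<in> monoms"
proof -
  have "{v. dual_exp a b v \<noteq> 0} \<subseteq> {v. b v \<noteq> 0}"
    by (auto simp: dual_exp_def)
  with assms show ?thesis
    unfolding monoms_def mem_Collect_eq by (rule finite_subset[rotated])
qed

definition dual_depol :: "('v \<Rightarrow> nat) \<Rightarrow> ('v \<times> nat \<Rightarrow> nat) \<Rightarrow> ('v \<Rightarrow> nat)" where
  "dual_depol a m v =
     (if \<exists>l\<ge>1. m (v, l) \<noteq> 0 then a v + 1 - (LEAST l. 1 \<le> l \<and> m (v, l) \<noteq> 0) else 0)"

lemma le_dual_depol_iff:
  assumes "1 \<le> c"
  shows "c \<le> dual_depol a m v \<longleftrightarrow> (\<exists>l. 1 \<le> l \<and> l \<le> a v + 1 - c \<and> m (v, l) \<noteq> 0)"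
proof (cases "\<exists>l\<ge>1. m (v, l) \<noteq> 0")
  case True
  define f where "f = (LEAST l. 1 \<le> l \<and> m (v, l) \<noteq> 0)"
  have f: "1 \<le> f" "m (v, f) \<noteq> 0"
    using LeastI_ex[of "\<lambda>l. 1 \<le> l \<and> m (v, l) \<noteq> 0"] True unfolding f_def by auto
  have f_least: "f \<le> l" if "1 \<le> l" "m (v, l) \<noteq> 0" for l
    unfolding f_def using that by (intro Least_le) simp
  have "c \<le> a v + 1 - f \<longleftrightarrow> (\<exists>l. 1 \<le> l \<and> l \<le> a v + 1 - c \<and> m (v, l) \<noteq> 0)"
  proof
    assume "c \<le> a v + 1 - f"
    then have "f \<le> a v + 1 - c"
      using f(1) assms by linarith
    with f show "\<exists>l. 1 \<le> l \<and> l \<le> a v + 1 - c \<and> m (v, l) \<noteq> 0"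
      by blast
  next
    assume "\<exists>l. 1 \<le> l \<and> l \<le> a v + 1 - c \<and> m (v, l) \<noteq> 0"
    then obtain l where l: "1 \<le> l" "l \<le> a v + 1 - c" "m (v, l) \<noteq> 0"
      by blast
    then have "f \<le> l"
      using f_least by blast
    with l(2) f(1) assms show "c \<le> a v + 1 - f"
      by linarith
  qed
  with True show ?thesis
    by (simp add: dual_depol_def f_def)
next
  case False
  with assms show ?thesis
    by (auto simp: dual_depol_def)
qed

lemma dual_depol_monoms:
  assumes "m \<in> monoms"
  shows "dual_depol a m \<in> monoms"
proof -
  have "{v. dual_depol a m v \<noteq> 0} \<subseteq> fst ` {p. m p \<noteq> 0}"
  proof
    fix v assume "v \<in> {v. dual_depol a m v \<noteq> 0}"
    then obtain l where "m (v, l) \<noteq> 0"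
      by (auto simp: dual_depol_def split: if_splits)
    then show "v \<in> fst ` {p. m p \<noteq> 0}"
      by force
  qed
  moreover have "finite (fst ` {p. m p \<noteq> 0})"
    using assms by (simp add: monoms_def)
  ultimately show ?thesis
    unfolding monoms_def mem_Collect_eq by (rule finite_subset)
qed

lemma meets_pol_vars_dual_exp_iff:
  "supp m \<inter> pol_vars (dual_exp a b) \<noteq> {} \<longleftrightarrow> (\<exists>v. 1 \<le> b v \<and> b v \<le> dual_depol a m v)"
proof -
  have "supp m \<inter> pol_vars (dual_exp a b) \<noteq> {} \<longleftrightarrow>
      (\<exists>v. 1 \<le> b v \<and> (\<exists>l. 1 \<le> l \<and> l \<le> a v + 1 - b v \<and> m (v, l) \<noteq> 0))"
    by (auto simp: supp_def pol_vars_def dual_exp_def split: if_splits)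
  also have "\<dots> \<longleftrightarrow> (\<exists>v. 1 \<le> b v \<and> b v \<le> dual_depol a m v)"
    by (meson le_dual_depol_iff)
  finally show ?thesis .
qed

theorem alex_dual_pol_alex_dual:
  assumes "finite G" "G \<subseteq> monoms"
  shows "alex_dual (pol (alex_dual (mono_ideal G))) =
    {m \<in> monoms. dual_depol (lcm_exp (mono_ideal G)) m \<in> mono_ideal G}"
proof -
  let ?I = "mono_ideal G"
  let ?a = "lcm_exp ?I"
  define S where "S = Irr_set ?I"
  define D where "D = dual_exp ?a ` S"
  define F where "F = pol_vars ` mingens (mono_ideal D)"
  have S: "finite S" "S \<subseteq> monoms" "?I = irr_inter S"
    using irr_decomp_Irr_set[OF assms] by (auto simp: S_def irr_decomp_iff)
  have D: "finite D" "D \<subseteq> monoms"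
    using S(1,2) dual_exp_monoms by (auto simp: D_def)
  have "mingens (mono_ideal D) \<subseteq> D"
    using D(2) by (rule mingens_mono_ideal_subset)
  then have F: "finite F" "\<forall>B\<in>F. finite B"
    using finite_subset[OF _ D(1)] D(2) finite_pol_vars by (auto simp: F_def)
  have "pol (alex_dual ?I) = mono_ideal (sqf ` F)"
    by (simp add: alex_dual_def pol_eq_mono_ideal_sqf D_def S_def F_def)
  then have dual: "alex_dual (pol (alex_dual ?I)) = {m \<in> monoms. transversal F (supp m)}"
    using alex_dual_mono_ideal_sqf[OF F] by simp
  have "transversal F (supp m) \<longleftrightarrow> dual_depol ?a m \<in> ?I" if "m \<in> monoms" for m
  proof -
    have "transversal F (supp m) \<longleftrightarrow> (\<forall>e\<in>mingens (mono_ideal D). supp m \<inter> pol_vars e \<noteq> {})"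
      by (simp add: transversal_def F_def)
    also have "\<dots> \<longleftrightarrow> (\<forall>e\<in>D. supp m \<inter> pol_vars e \<noteq> {})"
      using D(2) by (rule ball_mingens_mono_ideal_iff) (use pol_vars_mono in blast)
    also have "\<dots> \<longleftrightarrow> (\<forall>b\<in>S. \<exists>v. 1 \<le> b v \<and> b v \<le> dual_depol ?a m v)"
      by (simp add: D_def meets_pol_vars_dual_exp_iff)
    also have "\<dots> \<longleftrightarrow> dual_depol ?a m \<in> ?I"
      using S(3) dual_depol_monoms[OF that] by (auto simp: irr_inter_def irr_ideal_def)
    finally show ?thesis .
  qed
  with dual show ?thesis
    by auto
qed

subsection \<open>Weighted oriented graphs\<close>

lemma edge_mono_monoms: "edge_mono w i j \<in> monoms"
proof -
  have "{v. edge_mono w i j v \<noteq> 0} \<subseteq> {i, j}"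
    by (auto simp: edge_mono_def split: if_splits)
  then show ?thesis
    unfolding monoms_def mem_Collect_eq by (rule finite_subset) simp
qed

lemma mdvd_edge_mono_iff:
  assumes "i \<noteq> j"
  shows "mdvd (edge_mono w i j) y \<longleftrightarrow> 1 \<le> y i \<and> w j \<le> y j"
proof
  assume "mdvd (edge_mono w i j) y"
  then have "edge_mono w i j i \<le> y i" "edge_mono w i j j \<le> y j"
    by (auto simp: mdvd_def)
  with assms show "1 \<le> y i \<and> w j \<le> y j"
    by (simp add: edge_mono_def)
next
  assume "1 \<le> y i \<and> w j \<le> y j"
  with assms show "mdvd (edge_mono w i j) y"
    by (auto simp: mdvd_def edge_mono_def)
qed

lemma mem_edge_ideal_GD_edges_iff:
  "m \<in> edge_ideal (GD_edges E w) \<longleftrightarrow>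
    m \<in> monoms \<and> (\<exists>(i, j)\<in>E. (\<exists>l. 1 \<le> l \<and> l \<le> w i \<and> m (i, l) \<noteq> 0) \<and> m (j, 1) \<noteq> 0)"
proof -
  have "(\<exists>B\<in>GD_edges E w. B \<subseteq> supp m) \<longleftrightarrow>
      (\<exists>(i, j)\<in>E. (\<exists>l. 1 \<le> l \<and> l \<le> w i \<and> m (i, l) \<noteq> 0) \<and> m (j, 1) \<noteq> 0)"
  proof
    assume "\<exists>B\<in>GD_edges E w. B \<subseteq> supp m"
    then obtain i j l where "(i, j) \<in> E" "1 \<le> l" "l \<le> w i" "{(i, l), (j, 1)} \<subseteq> supp m"
      by (auto simp: GD_edges_def)
    then show "\<exists>(i, j)\<in>E. (\<exists>l. 1 \<le> l \<and> l \<le> w i \<and> m (i, l) \<noteq> 0) \<and> m (j, 1) \<noteq> 0"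
      by (auto simp: supp_def)
  next
    assume "\<exists>(i, j)\<in>E. (\<exists>l. 1 \<le> l \<and> l \<le> w i \<and> m (i, l) \<noteq> 0) \<and> m (j, 1) \<noteq> 0"
    then obtain i j l where ijl: "(i, j) \<in> E" "1 \<le> l" "l \<le> w i" "m (i, l) \<noteq> 0" "m (j, 1) \<noteq> 0"
      by blast
    then have "{(i, l), (j, 1)} \<in> GD_edges E w"
      unfolding GD_edges_def by (intro UN_I[of "(i, j)"]) auto
    moreover have "{(i, l), (j, 1)} \<subseteq> supp m"
      using ijl by (simp add: supp_def)
    ultimately show "\<exists>B\<in>GD_edges E w. B \<subseteq> supp m"
      by blast
  qed
  then show ?thesis
    by (simp add: edge_ideal_def mem_mono_ideal_sqf)
qed

context
  fixes n :: nat and E :: "(nat \<times> nat) set" and w :: "nat \<Rightarrow> nat"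
  assumes wog: "weighted_oriented_graph n E w"
begin

lemma wog_edge_irrefl_asym: "(i, j) \<in> E \<Longrightarrow> i \<noteq> j \<and> (j, i) \<notin> E"
  using wog by (simp add: weighted_oriented_graph_def)

lemma wog_edge_weights_pos: "(i, j) \<in> E \<Longrightarrow> 1 \<le> w i \<and> 1 \<le> w j"
  using wog by (force simp: weighted_oriented_graph_def Suc_le_eq)

lemma finite_wog_gens: "finite {edge_mono w i j | i j. (i, j) \<in> E}"
proof -
  have "finite E"
    using wog finite_subset[of E "{1..n} \<times> {1..n}"] by (simp add: weighted_oriented_graph_def)
  moreover have "{edge_mono w i j | i j. (i, j) \<in> E} = (\<lambda>(i, j). edge_mono w i j) ` E"
    by auto
  ultimately show ?thesis
    by simp
qed

lemma edge_mono_mdvd_imp_eq: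
  assumes "(i, j) \<in> E" "(k, l) \<in> E" "mdvd (edge_mono w k l) (edge_mono w i j)"
  shows "k = i \<and> l = j"
proof -
  have "k \<noteq> l" "1 \<le> w l"
    using wog_edge_irrefl_asym[OF assms(2)] wog_edge_weights_pos[OF assms(2)] by auto
  moreover have "edge_mono w k l k \<le> edge_mono w i j k" "edge_mono w k l l \<le> edge_mono w i j l"
    using assms(3) by (auto simp: mdvd_def)
  ultimately have "1 \<le> edge_mono w i j k" "1 \<le> edge_mono w i j l"
    by (simp_all add: edge_mono_def)
  then have "k \<in> {i, j}" "l \<in> {i, j}"
    by (auto simp: edge_mono_def split: if_splits)
  with \<open>k \<noteq> l\<close> assms(2) wog_edge_irrefl_asym[OF assms(1)] show ?thesis
    by auto
qed

lemma mingens_wog_ideal: "mingens (wog_ideal E w) = {edge_mono w i j | i j. (i, j) \<in> E}"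
  unfolding wog_ideal_def
  by (rule mingens_mono_ideal_antichain) (use edge_mono_monoms edge_mono_mdvd_imp_eq in blast)+

(* A source v occurs in the generators only with exponent 1, so the lcm exponent equals w v
   only because sources have weight 1. *)
lemma lcm_exp_wog_ideal:
  assumes "(i, j) \<in> E" "v \<in> {i, j}"
  shows "lcm_exp (wog_ideal E w) v = w v"
proof -
  have "1 \<le> w v"
    using wog_edge_weights_pos[OF assms(1)] assms(2) by auto
  then have bound: "g v \<le> w v" if "g \<in> {edge_mono w i j | i j. (i, j) \<in> E}" for g
    using that wog_edge_irrefl_asym by (auto simp: edge_mono_def)
  obtain g where g: "g \<in> {edge_mono w i j | i j. (i, j) \<in> E}" "g v = w v"
  proof (cases "\<exists>k. (k, v) \<in> E")
    case True
    then obtain k where "(k, v) \<in> E"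
      by blast
    with wog_edge_irrefl_asym that show ?thesis
      by (force simp: edge_mono_def)
  next
    case False
    then have "w v = 1"
      using wog assms by (auto simp: weighted_oriented_graph_def source_def)
    moreover have "v = i"
      using False assms by blast
    ultimately show ?thesis
      using that wog_edge_irrefl_asym[OF assms(1)] assms(1) by (force simp: edge_mono_def)
  qed
  show ?thesis
    unfolding lcm_exp_eq_mlcm mingens_wog_ideal using finite_wog_gens bound g
    by (rule mlcm_eqI)
qed

lemma mem_wog_ideal_iff: "y \<in> wog_ideal E w \<longleftrightarrow> y \<in> monoms \<and> (\<exists>(i, j)\<in>E. 1 \<le> y i \<and> w j \<le> y j)"
proof
  assume "y \<in> wog_ideal E w"
  then obtain i j where "y \<in> monoms" "(i, j) \<in> E" "mdvd (edge_mono w i j) y"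
    by (auto simp: wog_ideal_def mono_ideal_def)
  then show "y \<in> monoms \<and> (\<exists>(i, j)\<in>E. 1 \<le> y i \<and> w j \<le> y j)"
    using mdvd_edge_mono_iff[of i j w y] wog_edge_irrefl_asym[of i j] by auto
next
  assume "y \<in> monoms \<and> (\<exists>(i, j)\<in>E. 1 \<le> y i \<and> w j \<le> y j)"
  then obtain i j where "y \<in> monoms" "(i, j) \<in> E" "1 \<le> y i" "w j \<le> y j"
    by blast
  then show "y \<in> wog_ideal E w"
    using mdvd_edge_mono_iff[of i j w y] wog_edge_irrefl_asym[of i j]
    by (auto simp: wog_ideal_def mono_ideal_def)
qed

lemma dual_depol_wog_edge_iff:
  assumes "(i, j) \<in> E"
  shows "1 \<le> dual_depol (lcm_exp (wog_ideal E w)) m i \<and> w j \<le> dual_depol (lcm_exp (wog_ideal E w)) m j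
    \<longleftrightarrow> (\<exists>l. 1 \<le> l \<and> l \<le> w i \<and> m (i, l) \<noteq> 0) \<and> m (j, 1) \<noteq> 0"
proof -
  let ?a = "lcm_exp (wog_ideal E w)"
  have "1 \<le> dual_depol ?a m i \<longleftrightarrow> (\<exists>l. 1 \<le> l \<and> l \<le> ?a i + 1 - 1 \<and> m (i, l) \<noteq> 0)"
    by (rule le_dual_depol_iff) simp
  moreover have "w j \<le> dual_depol ?a m j \<longleftrightarrow> (\<exists>l. 1 \<le> l \<and> l \<le> ?a j + 1 - w j \<and> m (j, l) \<noteq> 0)"
    using wog_edge_weights_pos[OF assms] by (intro le_dual_depol_iff) simp
  moreover have "?a i = w i" "?a j = w j"
    using lcm_exp_wog_ideal[OF assms] by simp_all
  moreover have "(\<exists>l. 1 \<le> l \<and> l \<le> 1 \<and> m (j, l) \<noteq> 0) \<longleftrightarrow> m (j, 1) \<noteq> 0"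
    using le_antisym by blast
  ultimately show ?thesis
    by simp
qed

end

theorem lemma5p5:
  fixes n :: nat and E :: "(nat \<times> nat) set" and w :: "nat \<Rightarrow> nat"
  assumes "weighted_oriented_graph n E w"
  shows "alex_dual (pol (alex_dual (wog_ideal E w))) = edge_ideal (GD_edges E w)"
proof (rule set_eqI)
  fix m :: "nat \<times> nat \<Rightarrow> nat"
  let ?y = "dual_depol (lcm_exp (wog_ideal E w)) m"
  have "m \<in> alex_dual (pol (alex_dual (wog_ideal E w))) \<longleftrightarrow> m \<in> monoms \<and> ?y \<in> wog_ideal E w"
    using alex_dual_pol_alex_dual[OF finite_wog_gens[OF assms]] edge_mono_monoms
    by (auto simp: wog_ideal_def)
  also have "\<dots> \<longleftrightarrow> m \<in> monoms \<and> (\<exists>(i, j)\<in>E. 1 \<le> ?y i \<and> w j \<le> ?y j)"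
    using mem_wog_ideal_iff[OF assms] dual_depol_monoms by blast
  also have "\<dots> \<longleftrightarrow> m \<in> monoms \<and> (\<exists>(i, j)\<in>E. (\<exists>l. 1 \<le> l \<and> l \<le> w i \<and> m (i, l) \<noteq> 0) \<and> m (j, 1) \<noteq> 0)"
    using dual_depol_wog_edge_iff[OF assms] by blast
  also have "\<dots> \<longleftrightarrow> m \<in> edge_ideal (GD_edges E w)"
    by (rule mem_edge_ideal_GD_edges_iff[symmetric])
  finally show "m \<in> alex_dual (pol (alex_dual (wog_ideal E w))) \<longleftrightarrow> m \<in> edge_ideal (GD_edges E w)" .
qed

end
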